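(* Let $m\ge4$ and let $\mathcal W_1$ be an $m\times m$ quadrilateral labyrinth set in $Q$. Then for every $n\ge1$, the set $Q\setminus L_n$ is neither path connected nor connected.
   Context: Let $Q$ be a convex quadrilateral in $\mathbb{R}^2$. Divide $Q$ into two triangles by its shorter diagonal (either diagonal if they have equal length). Label the vertices $Q_1,Q_2,Q_3,Q_4$ anticlockwise, starting at an endpoint of that diagonal, so that the diagonal is $Q_1Q_3$. Let $\Delta_1$ be the closed triangle $Q_1Q_2Q_3$ and $\Delta_2$ the closed triangle $Q_3Q_4Q_1$. Every $x\in Q$ has a unique representation $x=\sum_{i=1}^4\alpha_iQ_i$, defined as follows. If $x\in\Delta_1$, then $\alpha_4=0$ and $(\alpha_1,\alpha_2,\alpha_3)$ are the barycentric coordinates of $x$ in $\Delta_1$. If $x\in\Delta_2$, then $\alpha_2=0$ and $(\alpha_1,\alpha_3,\alpha_4)$ are the barycentric coordinates of $x$ in $\Delta_2$. For an ordered quadruple $V=(V_1,\dots,V_4)$ define $P_V:Q\to\mathbb{R}^2$ by $P_V(x)=\sum_i\alpha_iV_i$. For an integer $m\ge2$, define the following index sets: - $A_1=\{(k_1,k_2,k_3,0)\in\mathbb{Z}_{\ge0}^4:k_1+k_2+k_3=m-1,\ k_2\ne0\}$, - $A_2=\{(k_1,0,k_3,k_4)\in\mathbb{Z}_{\ge0}^4:k_1+k_3+k_4=m-1,\ k_4\ne0\}$, - $A_3=\{(k_1,0,k_3,0)\in\mathbb{Z}_{\ge0}^4:k_1+k_3=m-1\}$, - $A=A_1\cup A_2\cup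 A_3$. For $k\in A$, let $S_m(k)$ be the quadrilateral with ordered vertices $R_1R_2R_3R_4$ given below. - If $k\in A_1$: $R_1=\frac{(k_1+1)Q_1+k_2Q_2+k_3Q_3}{m}$, $R_2=\frac{k_1Q_1+(k_2+1)Q_2+k_3Q_3}{m}$, $R_3=\frac{k_1Q_1+k_2Q_2+(k_3+1)Q_3}{m}$, $R_4=\frac{(k_1+1)Q_1+(k_2-1)Q_2+(k_3+1)Q_3}{m}$. - If $k\in A_2$: $R_1=\frac{(k_1+1)Q_1+k_3Q_3+k_4Q_4}{m}$, $R_2=\frac{(k_1+1)Q_1+(k_3+1)Q_3+(k_4-1)Q_4}{m}$, $R_3=\frac{k_1Q_1+(k_3+1)Q_3+k_4Q_4}{m}$, $R_4=\frac{k_1Q_1+k_3Q_3+(k_4+1)Q_4}{m}$. - If $k\in A_3$: $R_1=\frac{(k_1+1)Q_1+k_3Q_3}{m}$, $R_2=\frac{k_1Q_1+Q_2+k_3Q_3}{m}$, $R_3=\frac{k_1Q_1+(k_3+1)Q_3}{m}$, $R_4=\frac{k_1Q_1+k_3Q_3+Q_4}{m}$. Let $\mathcal S_m=\{S_m(k):k\in A\}$. For $\mathcal W\subseteq\mathcal S_m$, the graph $\mathcal G(\mathcal W)$ has vertex set $\mathcal W$, with two elements adjacent iff they have a common side. An $m\times m$ quadrilateral labyrinth set ($m\ge4$) is a set $\mathcal W_1\subseteq\mathcal S_m$ satisfying three properties. (1) Tree property: $\mathcal G(\mathcal W_1)$ is a tree. (2) Exit property: there is exactly one $(k_1,k_2,0,0)\in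 A$ with $S_m(k_1,k_2,0,0)\in\mathcal W_1$ and $S_m(0,0,k_2,k_1)\in\mathcal W_1$. There is also exactly one $(k_1,0,0,k_4)\in A$ with $S_m(k_1,0,0,k_4)\in\mathcal W_1$ and $S_m(0,k_1,k_4,0)\in\mathcal W_1$. (3) Corner property: $\mathcal W_1$ contains at most one element of $\{S_m(m-1,0,0,0),S_m(0,0,m-1,0)\}$ and at most one element of $\{S_m(0,m-1,0,0),S_m(0,0,0,m-1)\}$. Define recursively for $n\ge2$: $\mathcal W_n=\{P_{W}(W'):W'\in\mathcal W_1,\ W\in\mathcal W_{n-1}\}$. Here $P_W(W')$ is the quadrilateral whose ordered vertices are the images under $P_W$ of the ordered vertices of $W'$. Let $L_n=\bigcup_{W\in\mathcal W_n}W$ (closed regions). *)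

theory Defs
  imports "HOL-Analysis.Analysis"
begin

type_synonym pt = "real^2"
type_synonym quad = "pt \<times> pt \<times> pt \<times> pt"
type_synonym idx = "nat \<times> nat \<times> nat \<times> nat"

definition orient :: "pt \<Rightarrow> pt \<Rightarrow> pt \<Rightarrow> real" where
  "orient a b c = (b$1 - a$1) * (c$2 - a$2) - (b$2 - a$2) * (c$1 - a$1)"

definition convex_quad_ccw :: "quad \<Rightarrow> bool" where
  "convex_quad_ccw Qs = (case Qs of (Q1,Q2,Q3,Q4) \<Rightarrow>
     orient Q1 Q2 Q3 > 0 \<and> orient Q2 Q3 Q4 > 0 \<and> orient Q3 Q4 Q1 > 0 \<and> orient Q4 Q1 Q2 > 0)"

definition region :: "quad \<Rightarrow> pt set" where
  "region Qs = (case Qs of (Q1,Q2,Q3,Q4) \<Rightarrow> convex hull {Q1,Q2,Q3,Q4})"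

definition bary3 :: "pt \<Rightarrow> pt \<Rightarrow> pt \<Rightarrow> pt \<Rightarrow> real \<times> real \<times> real" where
  "bary3 a b c x = (THE (u,v,w). u + v + w = 1 \<and> x = u *\<^sub>R a + v *\<^sub>R b + w *\<^sub>R c)"

definition alpha :: "quad \<Rightarrow> pt \<Rightarrow> real \<times> real \<times> real \<times> real" where
  "alpha Qs x = (case Qs of (Q1,Q2,Q3,Q4) \<Rightarrow>
     if x \<in> convex hull {Q1,Q2,Q3}
     then (case bary3 Q1 Q2 Q3 x of (a1,a2,a3) \<Rightarrow> (a1,a2,a3,0))
     else (case bary3 Q1 Q3 Q4 x of (a1,a3,a4) \<Rightarrow> (a1,0,a3,a4)))"

definition PV :: "quad \<Rightarrow> quad \<Rightarrow> pt \<Rightarrow> pt" where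
  "PV Qs V x = (case alpha Qs x of (a1,a2,a3,a4) \<Rightarrow> (case V of (V1,V2,V3,V4) \<Rightarrow>
      a1 *\<^sub>R V1 + a2 *\<^sub>R V2 + a3 *\<^sub>R V3 + a4 *\<^sub>R V4))"

definition Pquad :: "quad \<Rightarrow> quad \<Rightarrow> quad \<Rightarrow> quad" where
  "Pquad Qs V W = (case W of (R1,R2,R3,R4) \<Rightarrow> (PV Qs V R1, PV Qs V R2, PV Qs V R3, PV Qs V R4))"

definition A1 :: "nat \<Rightarrow> idx set" where
  "A1 m = {(k1,k2,k3,k4). k4 = 0 \<and> k1 + k2 + k3 = m - 1 \<and> k2 \<noteq> 0}"
definition A2 :: "nat \<Rightarrow> idx set" where
  "A2 m = {(k1,k2,k3,k4). k2 = 0 \<and> k1 + k3 + k4 = m - 1 \<and> k4 \<noteq> 0}"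
definition A3 :: "nat \<Rightarrow> idx set" where
  "A3 m = {(k1,k2,k3,k4). k2 = 0 \<and> k4 = 0 \<and> k1 + k3 = m - 1}"
definition Aidx :: "nat \<Rightarrow> idx set" where
  "Aidx m = A1 m \<union> A2 m \<union> A3 m"

definition comb :: "quad \<Rightarrow> nat \<Rightarrow> real \<Rightarrow> real \<Rightarrow> real \<Rightarrow> real \<Rightarrow> pt" where
  "comb Qs m c1 c2 c3 c4 = (case Qs of (Q1,Q2,Q3,Q4) \<Rightarrow>
     (1 / real m) *\<^sub>R (c1 *\<^sub>R Q1 + c2 *\<^sub>R Q2 + c3 *\<^sub>R Q3 + c4 *\<^sub>R Q4))"

text \<open>The quadrilateral S_m(k) (only meaningful for k in A).\<close>
definition Sm :: "quad \<Rightarrow> nat \<Rightarrow> idx \<Rightarrow> quad" where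
  "Sm Qs m k = (case k of (k1,k2,k3,k4) \<Rightarrow>
     let a = real k1; b = real k2; c = real k3; d = real k4 in
     if k \<in> A1 m then
       (comb Qs m (a+1) b c 0, comb Qs m a (b+1) c 0, comb Qs m a b (c+1) 0,
        comb Qs m (a+1) (b-1) (c+1) 0)
     else if k \<in> A2 m then
       (comb Qs m (a+1) 0 c d, comb Qs m (a+1) 0 (c+1) (d-1), comb Qs m a 0 (c+1) d,
        comb Qs m a 0 c (d+1))
     else
       (comb Qs m (a+1) 0 c 0, comb Qs m a 1 c 0, comb Qs m a 0 (c+1) 0,
        comb Qs m a 0 c 1))"

definition Sset :: "quad \<Rightarrow> nat \<Rightarrow> quad set" where
  "Sset Qs m = Sm Qs m ` Aidx m"

definition sides :: "quad \<Rightarrow> pt set set" where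
  "sides W = (case W of (R1,R2,R3,R4) \<Rightarrow>
     {closed_segment R1 R2, closed_segment R2 R3, closed_segment R3 R4, closed_segment R4 R1})"

definition adjacent :: "quad \<Rightarrow> quad \<Rightarrow> bool" where
  "adjacent W W' = (W \<noteq> W' \<and> sides W \<inter> sides W' \<noteq> {})"

definition is_walk :: "('a \<Rightarrow> 'a \<Rightarrow> bool) \<Rightarrow> 'a set \<Rightarrow> 'a list \<Rightarrow> bool" where
  "is_walk E V vs = (vs \<noteq> [] \<and> set vs \<subseteq> V \<and> (\<forall>i. Suc i < length vs \<longrightarrow> E (vs ! i) (vs ! Suc i)))"

definition graph_connected :: "('a \<Rightarrow> 'a \<Rightarrow> bool) \<Rightarrow> 'a set \<Rightarrow> bool" where
  "graph_connected E V = (V \<noteq> {} \<and>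
     (\<forall>u\<in>V. \<forall>v\<in>V. \<exists>vs. is_walk E V vs \<and> hd vs = u \<and> last vs = v))"

definition has_cycle :: "('a \<Rightarrow> 'a \<Rightarrow> bool) \<Rightarrow> 'a set \<Rightarrow> bool" where
  "has_cycle E V = (\<exists>vs. is_walk E V vs \<and> distinct vs \<and> length vs \<ge> 3 \<and> E (last vs) (hd vs))"

definition is_tree :: "('a \<Rightarrow> 'a \<Rightarrow> bool) \<Rightarrow> 'a set \<Rightarrow> bool" where
  "is_tree E V = (graph_connected E V \<and> \<not> has_cycle E V)"

definition labyrinth_set :: "quad \<Rightarrow> nat \<Rightarrow> quad set \<Rightarrow> bool" where
  "labyrinth_set Qs m W1 = (m \<ge> 4 \<and> W1 \<subseteq> Sset Qs m
     \<and> is_tree adjacent W1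
     \<and> (\<exists>!(k1,k2). (k1,k2,0,0) \<in> Aidx m \<and> Sm Qs m (k1,k2,0,0) \<in> W1 \<and> Sm Qs m (0,0,k2,k1) \<in> W1)
     \<and> (\<exists>!(k1,k4). (k1,0,0,k4) \<in> Aidx m \<and> Sm Qs m (k1,0,0,k4) \<in> W1 \<and> Sm Qs m (0,k1,k4,0) \<in> W1)
     \<and> \<not> (Sm Qs m (m-1,0,0,0) \<in> W1 \<and> Sm Qs m (0,0,m-1,0) \<in> W1)
     \<and> \<not> (Sm Qs m (0,m-1,0,0) \<in> W1 \<and> Sm Qs m (0,0,0,m-1) \<in> W1))"

text \<open>W_n for n \<ge> 1 (the value at 0 is an irrelevant placeholder).\<close>
fun Wlev :: "quad \<Rightarrow> quad set \<Rightarrow> nat \<Rightarrow> quad set" where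
  "Wlev Qs W1 0 = {}"
| "Wlev Qs W1 (Suc 0) = W1"
| "Wlev Qs W1 (Suc (Suc n)) = {Pquad Qs W W' | W W'. W' \<in> W1 \<and> W \<in> Wlev Qs W1 (Suc n)}"

definition Llev :: "quad \<Rightarrow> quad set \<Rightarrow> nat \<Rightarrow> pt set" where
  "Llev Qs W1 n = (\<Union>W\<in>Wlev Qs W1 n. region W)"

end

theory Submission
  imports Defs
begin

text \<open>
  The coordinates alpha are piecewise affine on Q, so every P_V is continuous and sends the point
  with coordinates (c_1,...,c_4) to c_1 V_1 + ... + c_4 V_4. Hence S_m(k) is a cell of an m x m grid
  on Q, P_V maps it to the corresponding cell of the grid on V, and the chart
  h = P_{[0,1]^2} is a homeomorphism of Q onto the unit square.

  The two vertical exit cells of W_1 meet the bottom and the top side of Q at the same relative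
  position, and likewise for the horizontal exits. So whenever two quadrilaterals of W_n share a
  side, suitable exit cells inside them share a side, and by induction the sets P_W(Q), W in W_n,
  form a path-connected subset of L_n that touches all four sides of Q. By the corner property one
  of Q_1, Q_3 and one of Q_2, Q_4 lie outside L_n; these two vertices span a side of Q, and under h
  any path joining them in Q - L_n would have to cross that subset (Fashoda's theorem). As Q - L_n
  is locally path connected, it is not connected either.
\<close>

section \<open>Orientation and barycentric coordinates\<close>

lemma orient_rotate: "orient a b c = orient b c a"
  by (simp add: orient_def algebra_simps)

lemma orient_swap_12: "orient b a c = - orient a b c"
  by (simp add: orient_def algebra_simps)

lemma orient_swap_23: "orient a c b = - orient a b c"
  by (simp add: orient_def algebra_simps)

lemma orient_degenerate [simp]: "orient a b a = 0" "orient a b b = 0"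
  by (simp_all add: orient_def)

lemma orient_affine2:
  assumes "u + v = 1"
  shows "orient p q (u *\<^sub>R a + v *\<^sub>R b) = u * orient p q a + v * orient p q b"
  using assms unfolding orient_def by simp algebra

lemma orient_affine3:
  assumes "u + v + w = 1"
  shows "orient p q (u *\<^sub>R a + v *\<^sub>R b + w *\<^sub>R c)
    = u * orient p q a + v * orient p q b + w * orient p q c"
  using assms unfolding orient_def by simp algebra

lemma orient_barycentric:
  "orient a b c *\<^sub>R x = orient b c x *\<^sub>R a + orient c a x *\<^sub>R b + orient a b x *\<^sub>R c"
  unfolding vec_eq_iff forall_2 orient_def by simp algebra

lemma orient_barycentric_sum: "orient b c x + orient c a x + orient a b x = orient a b c"
  unfolding orient_def by (simp add: algebra_simps)

lemma barycentric_repr: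
  assumes D: "orient a b c \<noteq> 0"
  shows "x = (orient b c x / orient a b c) *\<^sub>R a + (orient c a x / orient a b c) *\<^sub>R b
           + (orient a b x / orient a b c) *\<^sub>R c"
    and "orient b c x / orient a b c + orient c a x / orient a b c + orient a b x / orient a b c = 1"
proof -
  show "orient b c x / orient a b c + orient c a x / orient a b c + orient a b x / orient a b c = 1"
    using orient_barycentric_sum[of b c x a] D by (simp add: add_divide_distrib[symmetric])
  have "x = (1 / orient a b c) *\<^sub>R (orient a b c *\<^sub>R x)"
    using D by simp
  then show "x = (orient b c x / orient a b c) *\<^sub>R a + (orient c a x / orient a b c) *\<^sub>R b
           + (orient a b x / orient a b c) *\<^sub>R c"
    unfolding orient_barycentric[of a b c x] by (simp add: scaleR_add_right)
qed

lemma orient_of_barycentric: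
  assumes "u + v + w = 1" "x = u *\<^sub>R a + v *\<^sub>R b + w *\<^sub>R c"
  shows "orient b c x = u * orient a b c" "orient c a x = v * orient a b c"
    "orient a b x = w * orient a b c"
proof -
  have e: "orient p q x = u * orient p q a + v * orient p q b + w * orient p q c" for p q
    using orient_affine3[OF assms(1), of p q a b c] assms(2) by simp
  show "orient b c x = u * orient a b c" using e[of b c] orient_rotate[of a b c] by simp
  show "orient c a x = v * orient a b c"
    using e[of c a] orient_rotate[of a b c] orient_rotate[of b c a] by simp
  show "orient a b x = w * orient a b c" using e[of a b] by simp
qed

lemma bary3_eq:
  assumes D: "orient a b c \<noteq> 0" and x: "u + v + w = 1" "x = u *\<^sub>R a + v *\<^sub>R b + w *\<^sub>R c"
  shows "bary3 a b c x = (u, v, w)"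
  unfolding bary3_def
proof (rule the_equality)
  show "case (u, v, w) of (u, v, w) \<Rightarrow> u + v + w = 1 \<and> x = u *\<^sub>R a + v *\<^sub>R b + w *\<^sub>R c"
    using x by simp
  fix p assume "case p of (u, v, w) \<Rightarrow> u + v + w = 1 \<and> x = u *\<^sub>R a + v *\<^sub>R b + w *\<^sub>R c"
  then obtain u' v' w' where p: "p = (u', v', w')" "u' + v' + w' = 1"
      "x = u' *\<^sub>R a + v' *\<^sub>R b + w' *\<^sub>R c"
    by (cases p) auto
  show "p = (u, v, w)"
    using orient_of_barycentric[OF p(2,3)] orient_of_barycentric[OF x] D p(1) by simp
qed

lemma mem_convex_hull_3_iff_orient:
  assumes D: "orient a b c > 0"
  shows "x \<in> convex hull {a, b, c} \<longleftrightarrow> orient b c x \<ge> 0 \<and> orient c a x \<ge> 0 \<and> orient a b x \<ge> 0"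
proof
  assume "x \<in> convex hull {a, b, c}"
  then obtain u v w where h: "0 \<le> u" "0 \<le> v" "0 \<le> w" "u + v + w = 1"
      "x = u *\<^sub>R a + v *\<^sub>R b + w *\<^sub>R c"
    unfolding convex_hull_3 by auto
  show "orient b c x \<ge> 0 \<and> orient c a x \<ge> 0 \<and> orient a b x \<ge> 0"
    using orient_of_barycentric[OF h(4,5)] h D by simp
next
  assume h: "orient b c x \<ge> 0 \<and> orient c a x \<ge> 0 \<and> orient a b x \<ge> 0"
  have D0: "orient a b c \<noteq> 0" using D by simp
  show "x \<in> convex hull {a, b, c}"
    unfolding convex_hull_3 using barycentric_repr[OF D0, of x] h D by force
qed

lemma convex_orient_ge: "convex {x. d \<le> orient p q x}"
  unfolding convex_def
proof (intro allI impI ballI, simp)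
  fix x y :: pt and u v :: real
  assume h: "d \<le> orient p q x" "d \<le> orient p q y" "0 \<le> u" "0 \<le> v" "u + v = 1"
  then have "u * d + v * d \<le> u * orient p q x + v * orient p q y"
    by (intro add_mono mult_left_mono)
  moreover have "u * d + v * d = d" using h(5) by (metis distrib_right mult_1)
  ultimately show "d \<le> orient p q (u *\<^sub>R x + v *\<^sub>R y)"
    using orient_affine2[OF h(5), of p q x y] by linarith
qed

lemma continuous_on_orient: "continuous_on S (orient p q)"
  unfolding orient_def by (intro continuous_intros)

section \<open>Coordinates on a convex quadrilateral\<close>

definition quad_coords :: "real \<Rightarrow> real \<Rightarrow> real \<Rightarrow> real \<Rightarrow> bool" where
  "quad_coords c1 c2 c3 c4 \<longleftrightarrow>
     0 \<le> c1 \<and> 0 \<le> c2 \<and> 0 \<le> c3 \<and> 0 \<le> c4 \<and> c1 + c2 + c3 + c4 = 1 \<and> (c2 = 0 \<or> c4 = 0)"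

definition quad_comb :: "quad \<Rightarrow> real \<Rightarrow> real \<Rightarrow> real \<Rightarrow> real \<Rightarrow> pt" where
  "quad_comb V c1 c2 c3 c4 =
     (case V of (V1, V2, V3, V4) \<Rightarrow> c1 *\<^sub>R V1 + c2 *\<^sub>R V2 + c3 *\<^sub>R V3 + c4 *\<^sub>R V4)"

definition vtx1 :: "quad \<Rightarrow> pt" where "vtx1 X = fst X"
definition vtx2 :: "quad \<Rightarrow> pt" where "vtx2 X = fst (snd X)"
definition vtx3 :: "quad \<Rightarrow> pt" where "vtx3 X = fst (snd (snd X))"
definition vtx4 :: "quad \<Rightarrow> pt" where "vtx4 X = snd (snd (snd X))"

lemmas vtx_defs = vtx1_def vtx2_def vtx3_def vtx4_def

lemma quad_comb_vtx: "quad_comb V c1 c2 c3 c4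
  = c1 *\<^sub>R vtx1 V + c2 *\<^sub>R vtx2 V + c3 *\<^sub>R vtx3 V + c4 *\<^sub>R vtx4 V"
  by (simp add: quad_comb_def vtx_defs split: prod.splits)

lemma quad_comb_in_region:
  assumes "quad_coords c1 c2 c3 c4"
  shows "quad_comb V c1 c2 c3 c4 \<in> region V"
proof -
  obtain V1 V2 V3 V4 where V: "V = (V1, V2, V3, V4)" by (cases V) auto
  have "convex hull {V1, V2, V3} \<subseteq> region V" "convex hull {V1, V3, V4} \<subseteq> region V"
    unfolding V region_def prod.case by (rule hull_mono; blast)+
  moreover have "quad_comb V c1 c2 c3 c4 \<in> convex hull {V1, V2, V3} \<union> convex hull {V1, V3, V4}"
    using assms unfolding V convex_hull_3 quad_coords_def quad_comb_def by force
  ultimately show ?thesis by blast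
qed

locale convex_quad =
  fixes Q1 Q2 Q3 Q4 :: pt
  assumes ccw: "convex_quad_ccw (Q1, Q2, Q3, Q4)"
begin

abbreviation "Qs \<equiv> (Q1, Q2, Q3, Q4)"
abbreviation "QQ \<equiv> convex hull {Q1, Q2, Q3, Q4}"
abbreviation "T1 \<equiv> convex hull {Q1, Q2, Q3}"
abbreviation "T2 \<equiv> convex hull {Q1, Q3, Q4}"

lemma orient_Q123: "orient Q1 Q2 Q3 > 0" and orient_Q234: "orient Q2 Q3 Q4 > 0"
  and orient_Q341: "orient Q3 Q4 Q1 > 0" and orient_Q412: "orient Q4 Q1 Q2 > 0"
  using ccw by (simp_all add: convex_quad_ccw_def)

lemma orient_Q134: "orient Q1 Q3 Q4 > 0"
  using orient_Q341 orient_rotate[of Q3 Q4 Q1] orient_rotate[of Q4 Q1 Q3] by simp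

lemma region_Qs [simp]: "region Qs = QQ"
  by (simp add: region_def)

lemma alpha_quad_comb:
  assumes c: "quad_coords c1 c2 c3 c4"
  shows "alpha Qs (quad_comb Qs c1 c2 c3 c4) = (c1, c2, c3, c4)"
proof (cases "c4 = 0")
  case True
  let ?x = "quad_comb Qs c1 c2 c3 c4"
  have x: "?x = c1 *\<^sub>R Q1 + c2 *\<^sub>R Q2 + c3 *\<^sub>R Q3" using True by (simp add: quad_comb_def)
  have s: "c1 + c2 + c3 = 1" using c True by (simp add: quad_coords_def)
  have "?x \<in> T1" unfolding x convex_hull_3 using c True by (auto simp: quad_coords_def)
  moreover have "bary3 Q1 Q2 Q3 ?x = (c1, c2, c3)" using bary3_eq[OF _ s x] orient_Q123 by simp
  ultimately show ?thesis using True by (simp add: alpha_def)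
next
  case False
  let ?x = "quad_comb Qs c1 c2 c3 c4"
  have c2: "c2 = 0" using c False by (simp add: quad_coords_def)
  have x: "?x = c1 *\<^sub>R Q1 + c3 *\<^sub>R Q3 + c4 *\<^sub>R Q4" using c2 by (simp add: quad_comb_def)
  have s: "c1 + c3 + c4 = 1" using c c2 by (simp add: quad_coords_def)
  have "c4 > 0" using c False by (simp add: quad_coords_def)
  then have "orient Q1 Q3 ?x > 0"
    using orient_of_barycentric(3)[OF s x] orient_Q134 by simp
  then have "?x \<notin> T1"
    using mem_convex_hull_3_iff_orient[OF orient_Q123] orient_swap_12[of Q3 Q1 ?x] by auto
  moreover have "bary3 Q1 Q3 Q4 ?x = (c1, c3, c4)" using bary3_eq[OF _ s x] orient_Q134 by simp
  ultimately show ?thesis using c2 by (simp add: alpha_def)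
qed

lemma PV_quad_comb:
  "quad_coords c1 c2 c3 c4 \<Longrightarrow> PV Qs V (quad_comb Qs c1 c2 c3 c4) = quad_comb V c1 c2 c3 c4"
  using alpha_quad_comb by (simp add: PV_def quad_comb_def split: prod.splits)

lemma QQ_halfplanes:
  assumes "x \<in> QQ"
  shows "orient Q1 Q2 x \<ge> 0" "orient Q2 Q3 x \<ge> 0" "orient Q3 Q4 x \<ge> 0" "orient Q4 Q1 x \<ge> 0"
proof -
  have h: "QQ \<subseteq> {x. 0 \<le> orient p q x}"
    if "orient p q Q1 \<ge> 0" "orient p q Q2 \<ge> 0" "orient p q Q3 \<ge> 0" "orient p q Q4 \<ge> 0" for p q
    by (rule hull_minimal) (use that convex_orient_ge in auto)
  have r: "orient a b c = orient c a b" for a b c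
    using orient_rotate[of a b c] orient_rotate[of b c a] by simp
  show "orient Q1 Q2 x \<ge> 0" using h[of Q1 Q2] assms orient_Q123 orient_Q412 r[of Q1 Q2 Q4] by force
  show "orient Q2 Q3 x \<ge> 0"
    using h[of Q2 Q3] assms orient_Q234 orient_Q123 orient_rotate[of Q1 Q2 Q3] by force
  show "orient Q3 Q4 x \<ge> 0"
    using h[of Q3 Q4] assms orient_Q341 orient_Q234 orient_rotate[of Q2 Q3 Q4] by force
  show "orient Q4 Q1 x \<ge> 0"
    using h[of Q4 Q1] assms orient_Q412 orient_Q341 orient_rotate[of Q3 Q4 Q1] by force
qed

lemma QQ_eq_triangles: "QQ = T1 \<union> T2"
proof
  show "QQ \<subseteq> T1 \<union> T2"
    using QQ_halfplanes mem_convex_hull_3_iff_orient[OF orient_Q123]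
      mem_convex_hull_3_iff_orient[OF orient_Q134] orient_swap_12[of Q3 Q1]
    by (smt (verit) UnI1 UnI2 subsetI)
  show "T1 \<union> T2 \<subseteq> QQ"
    by (intro Un_least; rule hull_mono; blast)
qed

lemma QQ_quad_comb:
  assumes "x \<in> QQ"
  obtains c1 c2 c3 c4 where "quad_coords c1 c2 c3 c4" "x = quad_comb Qs c1 c2 c3 c4"
proof -
  consider "x \<in> T1" | "x \<in> T2" using assms QQ_eq_triangles by blast
  then show ?thesis
  proof cases
    case 1
    then obtain u v w where "0 \<le> u" "0 \<le> v" "0 \<le> w" "u + v + w = 1"
        "x = u *\<^sub>R Q1 + v *\<^sub>R Q2 + w *\<^sub>R Q3"
      unfolding convex_hull_3 by auto
    then show ?thesis using that[of u v w 0] by (simp add: quad_coords_def quad_comb_def)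
  next
    case 2
    then obtain u v w where "0 \<le> u" "0 \<le> v" "0 \<le> w" "u + v + w = 1"
        "x = u *\<^sub>R Q1 + v *\<^sub>R Q3 + w *\<^sub>R Q4"
      unfolding convex_hull_3 by auto
    then show ?thesis using that[of u 0 v w] by (simp add: quad_coords_def quad_comb_def)
  qed
qed

lemma PV_in_region: "x \<in> QQ \<Longrightarrow> PV Qs V x \<in> region V"
  by (metis QQ_quad_comb PV_quad_comb quad_comb_in_region)

lemma PV_vertices:
  "PV Qs V Q1 = vtx1 V" "PV Qs V Q2 = vtx2 V" "PV Qs V Q3 = vtx3 V" "PV Qs V Q4 = vtx4 V"
proof -
  have c: "quad_coords 1 0 0 0" "quad_coords 0 1 0 0" "quad_coords 0 0 1 0" "quad_coords 0 0 0 1"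
    by (auto simp: quad_coords_def)
  show "PV Qs V Q1 = vtx1 V" using PV_quad_comb[OF c(1), of V] by (simp add: quad_comb_vtx vtx_defs)
  show "PV Qs V Q2 = vtx2 V" using PV_quad_comb[OF c(2), of V] by (simp add: quad_comb_vtx vtx_defs)
  show "PV Qs V Q3 = vtx3 V" using PV_quad_comb[OF c(3), of V] by (simp add: quad_comb_vtx vtx_defs)
  show "PV Qs V Q4 = vtx4 V" using PV_quad_comb[OF c(4), of V] by (simp add: quad_comb_vtx vtx_defs)
qed

lemma PV_on_T1:
  assumes "x \<in> T1"
  shows "PV Qs V x = quad_comb V (orient Q2 Q3 x / orient Q1 Q2 Q3) (orient Q3 Q1 x / orient Q1 Q2 Q3)
                        (orient Q1 Q2 x / orient Q1 Q2 Q3) 0"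
proof -
  have D: "orient Q1 Q2 Q3 \<noteq> 0" using orient_Q123 by simp
  have "quad_coords (orient Q2 Q3 x / orient Q1 Q2 Q3) (orient Q3 Q1 x / orient Q1 Q2 Q3)
                    (orient Q1 Q2 x / orient Q1 Q2 Q3) 0"
    using assms mem_convex_hull_3_iff_orient[OF orient_Q123, of x] barycentric_repr(2)[OF D, of x]
      orient_Q123
    by (simp add: quad_coords_def)
  moreover have "x = quad_comb Qs (orient Q2 Q3 x / orient Q1 Q2 Q3) (orient Q3 Q1 x / orient Q1 Q2 Q3)
                        (orient Q1 Q2 x / orient Q1 Q2 Q3) 0"
    using barycentric_repr(1)[OF D, of x] by (simp add: quad_comb_def)
  ultimately show ?thesis using PV_quad_comb by metis
qed

lemma PV_on_T2:
  assumes "x \<in> T2"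
  shows "PV Qs V x = quad_comb V (orient Q3 Q4 x / orient Q1 Q3 Q4) 0 (orient Q4 Q1 x / orient Q1 Q3 Q4)
                        (orient Q1 Q3 x / orient Q1 Q3 Q4)"
proof -
  have D: "orient Q1 Q3 Q4 \<noteq> 0" using orient_Q134 by simp
  have "quad_coords (orient Q3 Q4 x / orient Q1 Q3 Q4) 0 (orient Q4 Q1 x / orient Q1 Q3 Q4)
                    (orient Q1 Q3 x / orient Q1 Q3 Q4)"
    using assms mem_convex_hull_3_iff_orient[OF orient_Q134, of x] barycentric_repr(2)[OF D, of x]
      orient_Q134
    by (simp add: quad_coords_def)
  moreover have "x = quad_comb Qs (orient Q3 Q4 x / orient Q1 Q3 Q4) 0 (orient Q4 Q1 x / orient Q1 Q3 Q4)
                        (orient Q1 Q3 x / orient Q1 Q3 Q4)"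
    using barycentric_repr(1)[OF D, of x] by (simp add: quad_comb_def)
  ultimately show ?thesis using PV_quad_comb by metis
qed

lemma continuous_on_PV: "continuous_on QQ (PV Qs V)"
proof -
  have "continuous_on T1 (PV Qs V)"
    by (rule continuous_on_eq[OF _ PV_on_T1[symmetric]])
      (use orient_Q123 in \<open>auto simp: quad_comb_vtx intro!: continuous_intros continuous_on_orient\<close>)
  moreover have "continuous_on T2 (PV Qs V)"
    by (rule continuous_on_eq[OF _ PV_on_T2[symmetric]])
      (use orient_Q134 in \<open>auto simp: quad_comb_vtx intro!: continuous_intros continuous_on_orient\<close>)
  moreover have "closed T1" "closed T2"
    by (simp_all add: compact_imp_closed compact_convex_hull finite_imp_compact)
  ultimately show ?thesis
    unfolding QQ_eq_triangles by (rule continuous_on_closed_Un[rotated 2])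
qed

end
section \<open>The grid of S_m\<close>

text \<open>The grid point with coordinates (x/m, y/m), where V1, V2, V3, V4 play the role of
  (0,0), (1,0), (1,1), (0,1) and the diagonal V1 V3 is the line y = x.\<close>
definition grid_pt :: "quad \<Rightarrow> nat \<Rightarrow> nat \<Rightarrow> nat \<Rightarrow> pt" where
  "grid_pt V m x y = (if y \<le> x then comb V m (real m - real x) (real x - real y) (real y) 0
                      else comb V m (real m - real y) 0 (real x) (real y - real x))"

definition grid_cell :: "quad \<Rightarrow> nat \<Rightarrow> nat \<times> nat \<Rightarrow> quad" where
  "grid_cell V m p = (case p of (x, y) \<Rightarrow>
     (grid_pt V m x y, grid_pt V m (x + 1) y, grid_pt V m (x + 1) (y + 1), grid_pt V m x (y + 1)))"

definition cell_of_idx :: "idx \<Rightarrow> nat \<times> nat" where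
  "cell_of_idx k = (case k of (k1, k2, k3, k4) \<Rightarrow> (k2 + k3, k3 + k4))"

lemma comb_eq_quad_comb: "comb V m c1 c2 c3 c4 = quad_comb V (c1 / m) (c2 / m) (c3 / m) (c4 / m)"
  by (simp add: comb_def quad_comb_def split: prod.splits)
    (simp add: scaleR_add_right divide_inverse_commute)

lemma grid_pt_quad_comb:
  assumes "x \<le> m" "y \<le> m" "m > 0"
  obtains c1 c2 c3 c4 where "quad_coords c1 c2 c3 c4" "\<And>V. grid_pt V m x y = quad_comb V c1 c2 c3 c4"
proof (cases "y \<le> x")
  case True
  then show ?thesis
    using that[of "(real m - real x) / m" "(real x - real y) / m" "real y / m" 0] assms
    by (auto simp: quad_coords_def grid_pt_def comb_eq_quad_comb add_divide_distrib[symmetric])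
next
  case False
  then show ?thesis
    using that[of "(real m - real y) / m" 0 "real x / m" "(real y - real x) / m"] assms
    by (auto simp: quad_coords_def grid_pt_def comb_eq_quad_comb add_divide_distrib[symmetric])
qed

lemma grid_pt_in_region: "x \<le> m \<Longrightarrow> y \<le> m \<Longrightarrow> m > 0 \<Longrightarrow> grid_pt V m x y \<in> region V"
  by (metis grid_pt_quad_comb quad_comb_in_region)

lemma region_grid_cell_subset:
  assumes "x + 1 \<le> m" "y + 1 \<le> m"
  shows "region (grid_cell V m (x, y)) \<subseteq> region V"
proof -
  have "convex (region V)" by (cases V) (simp add: region_def convex_convex_hull)
  moreover have "{grid_pt V m x y, grid_pt V m (x + 1) y, grid_pt V m (x + 1) (y + 1),
      grid_pt V m x (y + 1)} \<subseteq> region V"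
    using grid_pt_in_region assms by simp
  ultimately show ?thesis unfolding grid_cell_def region_def by (simp add: hull_minimal)
qed

lemma cell_of_idx_bounds:
  "k \<in> Aidx m \<Longrightarrow> m > 0 \<Longrightarrow> fst (cell_of_idx k) + 1 \<le> m \<and> snd (cell_of_idx k) + 1 \<le> m"
  by (auto simp: Aidx_def A1_def A2_def A3_def cell_of_idx_def)

lemma Sm_eq_grid_cell:
  assumes "k \<in> Aidx m" "m > 0"
  shows "Sm V m k = grid_cell V m (cell_of_idx k)"
proof -
  obtain k1 k2 k3 k4 where k: "k = (k1, k2, k3, k4)" by (cases k) auto
  consider (a1) "k \<in> A1 m" | (a2) "k \<notin> A1 m" "k \<in> A2 m" | (a3) "k \<notin> A1 m" "k \<notin> A2 m" "k \<in> A3 m"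
    using assms(1) unfolding Aidx_def by blast
  then show ?thesis
  proof cases
    case a1
    then have h: "k4 = 0" "k2 \<noteq> 0" "real m = real k1 + real k2 + real k3 + 1"
      using k assms(2) by (auto simp: A1_def)
    show ?thesis using a1 h unfolding k Sm_def grid_cell_def cell_of_idx_def grid_pt_def
      by (simp add: Let_def of_nat_diff algebra_simps)
  next
    case a2
    then have h: "k2 = 0" "k4 \<noteq> 0" "real m = real k1 + real k3 + real k4 + 1"
      using k assms(2) by (auto simp: A2_def)
    show ?thesis using a2 h unfolding k Sm_def grid_cell_def cell_of_idx_def grid_pt_def
      by (cases "k4 = 1") (simp_all add: Let_def of_nat_diff algebra_simps)
  next
    case a3
    then have h: "k2 = 0" "k4 = 0" "real m = real k1 + real k3 + 1"
      using k assms(2) by (auto simp: A3_def)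
    show ?thesis using a3 h unfolding k Sm_def grid_cell_def cell_of_idx_def grid_pt_def
      by (simp add: Let_def of_nat_diff algebra_simps)
  qed
qed

lemma grid_pt_bottom: "grid_pt V m x 0 = (1 / m) *\<^sub>R ((real m - real x) *\<^sub>R vtx1 V + real x *\<^sub>R vtx2 V)"
  by (simp add: grid_pt_def comb_def vtx_defs split: prod.splits)

lemma grid_pt_top:
  "x \<le> m \<Longrightarrow> grid_pt V m x m = (1 / m) *\<^sub>R ((real m - real x) *\<^sub>R vtx4 V + real x *\<^sub>R vtx3 V)"
  by (cases "x = m") (auto simp: grid_pt_def comb_def vtx_defs split: prod.splits)

lemma grid_pt_left: "grid_pt V m 0 y = (1 / m) *\<^sub>R ((real m - real y) *\<^sub>R vtx1 V + real y *\<^sub>R vtx4 V)"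
  by (cases "y = 0") (auto simp: grid_pt_def comb_def vtx_defs split: prod.splits)

lemma grid_pt_right:
  "y \<le> m \<Longrightarrow> grid_pt V m m y = (1 / m) *\<^sub>R ((real m - real y) *\<^sub>R vtx2 V + real y *\<^sub>R vtx3 V)"
  by (auto simp: grid_pt_def comb_def vtx_defs split: prod.splits)

lemma grid_pt_corners:
  assumes "m > 0"
  shows "grid_pt V m 0 0 = vtx1 V" "grid_pt V m m 0 = vtx2 V"
    "grid_pt V m m m = vtx3 V" "grid_pt V m 0 m = vtx4 V"
  using assms by (simp_all add: grid_pt_bottom grid_pt_top grid_pt_left)

lemma vtx_grid_cell:
  "vtx1 (grid_cell V m (x, y)) = grid_pt V m x y" "vtx2 (grid_cell V m (x, y)) = grid_pt V m (x + 1) y"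
  "vtx3 (grid_cell V m (x, y)) = grid_pt V m (x + 1) (y + 1)"
  "vtx4 (grid_cell V m (x, y)) = grid_pt V m x (y + 1)"
  by (simp_all add: grid_cell_def vtx_defs)

context convex_quad
begin

lemma PV_grid_pt: "x \<le> m \<Longrightarrow> y \<le> m \<Longrightarrow> m > 0 \<Longrightarrow> PV Qs V (grid_pt Qs m x y) = grid_pt V m x y"
  by (metis grid_pt_quad_comb PV_quad_comb)

lemma grid_pt_in_QQ: "x \<le> m \<Longrightarrow> y \<le> m \<Longrightarrow> m > 0 \<Longrightarrow> grid_pt Qs m x y \<in> QQ"
  using grid_pt_in_region[of x m y Qs] by simp

lemma Pquad_grid_cell:
  "x + 1 \<le> m \<Longrightarrow> y + 1 \<le> m \<Longrightarrow> Pquad Qs V (grid_cell Qs m (x, y)) = grid_cell V m (x, y)"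
  by (simp add: Pquad_def grid_cell_def PV_grid_pt)

lemma Pquad_Sm:
  assumes "k \<in> Aidx m" "m > 0"
  shows "Pquad Qs V (Sm Qs m k) = grid_cell V m (cell_of_idx k)"
  using Pquad_grid_cell cell_of_idx_bounds[OF assms] Sm_eq_grid_cell[OF assms]
  by (cases "cell_of_idx k") auto

end

section \<open>A chart onto the unit square\<close>

definition unit_square :: quad where
  "unit_square = (vector [0, 0], vector [1, 0], vector [1, 1], vector [0, 1])"

lemma quad_comb_unit_square:
  "quad_comb unit_square c1 c2 c3 c4 $ 1 = c2 + c3" "quad_comb unit_square c1 c2 c3 c4 $ 2 = c3 + c4"
  by (simp_all add: quad_comb_def unit_square_def)

lemma grid_pt_unit_square:
  assumes "m > 0"
  shows "grid_pt unit_square m x y $ 1 = real x / m" "grid_pt unit_square m x y $ 2 = real y / m"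
  using assms
  by (auto simp: grid_pt_def comb_eq_quad_comb quad_comb_unit_square add_divide_distrib[symmetric])

context convex_quad
begin

abbreviation chart :: "pt \<Rightarrow> pt" where
  "chart \<equiv> PV Qs unit_square"

lemma chart_quad_comb:
  assumes "quad_coords c1 c2 c3 c4"
  shows "chart (quad_comb Qs c1 c2 c3 c4) $ 1 = c2 + c3" "chart (quad_comb Qs c1 c2 c3 c4) $ 2 = c3 + c4"
  using PV_quad_comb[OF assms] quad_comb_unit_square by metis+

lemma inj_on_chart: "inj_on chart QQ"
proof
  fix x y assume "x \<in> QQ" "y \<in> QQ" and eq: "chart x = chart y"
  obtain c1 c2 c3 c4 where c: "quad_coords c1 c2 c3 c4" "x = quad_comb Qs c1 c2 c3 c4"
    using QQ_quad_comb[OF \<open>x \<in> QQ\<close>] .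
  obtain d1 d2 d3 d4 where d: "quad_coords d1 d2 d3 d4" "y = quad_comb Qs d1 d2 d3 d4"
    using QQ_quad_comb[OF \<open>y \<in> QQ\<close>] .
  have "c2 + c3 = d2 + d3" "c3 + c4 = d3 + d4"
    using eq chart_quad_comb[OF c(1)] chart_quad_comb[OF d(1)] c(2) d(2) by metis+
  then have "c1 = d1 \<and> c2 = d2 \<and> c3 = d3 \<and> c4 = d4"
    using c(1) d(1) unfolding quad_coords_def by linarith
  then show "x = y" using c d by simp
qed

lemma chart_in_unit_box:
  assumes "x \<in> QQ"
  shows "chart x \<in> cbox 0 1"
proof -
  obtain c1 c2 c3 c4 where c: "quad_coords c1 c2 c3 c4" "x = quad_comb Qs c1 c2 c3 c4"
    using QQ_quad_comb[OF assms] .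
  moreover have "0 \<le> c2 + c3 \<and> c2 + c3 \<le> 1 \<and> 0 \<le> c3 + c4 \<and> c3 + c4 \<le> 1"
    using c(1) unfolding quad_coords_def by linarith
  ultimately show ?thesis unfolding mem_box_cart using chart_quad_comb by (auto simp: forall_2)
qed

lemma chart_vertices:
  "chart Q1 $ 1 = 0" "chart Q1 $ 2 = 0" "chart Q2 $ 1 = 1" "chart Q2 $ 2 = 0"
  "chart Q3 $ 1 = 1" "chart Q3 $ 2 = 1" "chart Q4 $ 1 = 0" "chart Q4 $ 2 = 1"
  by (simp_all add: PV_vertices vtx_defs unit_square_def)

lemma grid_pt_eq_iff:
  assumes "x \<le> m" "y \<le> m" "x' \<le> m" "y' \<le> m" "m > 0"
  shows "grid_pt Qs m x y = grid_pt Qs m x' y' \<longleftrightarrow> x = x' \<and> y = y'"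
proof
  assume "grid_pt Qs m x y = grid_pt Qs m x' y'"
  then have "grid_pt unit_square m x y = grid_pt unit_square m x' y'"
    using PV_grid_pt assms by metis
  then have "real x / m = real x' / m" "real y / m = real y' / m"
    using grid_pt_unit_square[OF assms(5)] by metis+
  then show "x = x' \<and> y = y'" using assms(5) by simp
qed simp

end

definition below :: "quad \<Rightarrow> quad \<Rightarrow> bool" where
  "below X Y \<longleftrightarrow> vtx3 X = vtx2 Y \<and> vtx4 X = vtx1 Y"

definition left_of :: "quad \<Rightarrow> quad \<Rightarrow> bool" where
  "left_of X Y \<longleftrightarrow> vtx2 X = vtx1 Y \<and> vtx3 X = vtx4 Y"

definition abut :: "quad \<Rightarrow> quad \<Rightarrow> bool" where
  "abut X Y \<longleftrightarrow> below X Y \<or> below Y X \<or> left_of X Y \<or> left_of Y X"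

lemma abut_Pquad: "abut X Y \<Longrightarrow> abut (Pquad Qs W X) (Pquad Qs W Y)"
  unfolding abut_def below_def left_of_def vtx_defs Pquad_def by (auto split: prod.splits)

context convex_quad
begin

lemma adjacent_grid_cells_abut:
  assumes "x + 1 \<le> m" "y + 1 \<le> m" "x' + 1 \<le> m" "y' + 1 \<le> m"
    and "adjacent (grid_cell Qs m (x, y)) (grid_cell Qs m (x', y'))"
  shows "abut (grid_cell Qs m (x, y)) (grid_cell Qs m (x', y'))"
  using assms unfolding adjacent_def sides_def grid_cell_def abut_def below_def left_of_def vtx_defs
  by (auto simp: doubleton_eq_iff grid_pt_eq_iff)

lemma abut_images_meet:
  assumes "abut X Y"
  shows "PV Qs X ` QQ \<inter> PV Qs Y ` QQ \<noteq> {}"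
proof -
  have "Q1 \<in> QQ" "Q2 \<in> QQ" "Q3 \<in> QQ" "Q4 \<in> QQ" by (simp_all add: hull_inc)
  then have "vtx1 Z \<in> PV Qs Z ` QQ" "vtx2 Z \<in> PV Qs Z ` QQ" "vtx3 Z \<in> PV Qs Z ` QQ"
    "vtx4 Z \<in> PV Qs Z ` QQ" for Z
    using PV_vertices by (metis image_eqI)+
  then show ?thesis using assms unfolding abut_def below_def left_of_def by (metis disjoint_iff)
qed

end

definition bottom_pt :: "real \<Rightarrow> quad \<Rightarrow> pt" where
  "bottom_pt u X = (1 - u) *\<^sub>R vtx1 X + u *\<^sub>R vtx2 X"
definition top_pt :: "real \<Rightarrow> quad \<Rightarrow> pt" where
  "top_pt u X = (1 - u) *\<^sub>R vtx4 X + u *\<^sub>R vtx3 X"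
definition left_pt :: "real \<Rightarrow> quad \<Rightarrow> pt" where
  "left_pt u X = (1 - u) *\<^sub>R vtx1 X + u *\<^sub>R vtx4 X"
definition right_pt :: "real \<Rightarrow> quad \<Rightarrow> pt" where
  "right_pt u X = (1 - u) *\<^sub>R vtx2 X + u *\<^sub>R vtx3 X"

lemma side_pts_quad_comb:
  "bottom_pt u V = quad_comb V (1 - u) u 0 0" "top_pt u V = quad_comb V 0 0 u (1 - u)"
  "left_pt u V = quad_comb V (1 - u) 0 0 u" "right_pt u V = quad_comb V 0 (1 - u) u 0"
  by (simp_all add: bottom_pt_def top_pt_def left_pt_def right_pt_def quad_comb_vtx)

text \<open>The point at relative position k/(m-1) of a segment is also at relative position k/(m-1)
  of the k-th of its m equal pieces. This is why the exit cells of all levels line up.\<close>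
lemma piece_point_eq:
  fixes A B :: pt
  assumes "k + 1 \<le> m" "m \<ge> 2" "u = real k / (real m - 1)"
  shows "(1 - u) *\<^sub>R ((1 / m) *\<^sub>R ((real m - real k) *\<^sub>R A + real k *\<^sub>R B))
       + u *\<^sub>R ((1 / m) *\<^sub>R ((real m - real (k + 1)) *\<^sub>R A + real (k + 1) *\<^sub>R B))
       = (1 - u) *\<^sub>R A + u *\<^sub>R B"
proof -
  have m1: "real m - 1 > 0" using assms(2) by simp
  have "(1 - u) *\<^sub>R ((1 / m) *\<^sub>R ((real m - real k) *\<^sub>R A + real k *\<^sub>R B))
       + u *\<^sub>R ((1 / m) *\<^sub>R ((real m - real (k + 1)) *\<^sub>R A + real (k + 1) *\<^sub>R B))
     = (((1 - u) * (real m - real k) + u * (real m - real (k + 1))) / m) *\<^sub>R A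
       + (((1 - u) * real k + u * real (k + 1)) / m) *\<^sub>R B"
    by (simp add: algebra_simps scaleR_add_right scaleR_add_left divide_inverse)
  also have "((1 - u) * (real m - real k) + u * (real m - real (k + 1))) / m = 1 - u"
    using m1 assms(2,3) by (simp add: field_simps)
  also have "((1 - u) * real k + u * real (k + 1)) / m = u"
    using m1 assms(2,3) by (simp add: field_simps)
  finally show ?thesis .
qed

context
  fixes k m :: nat and u :: real
  assumes k: "k + 1 \<le> m" and m: "m \<ge> 2" and u: "u = real k / (real m - 1)"
begin

lemma side_pts_grid_cell:
  "bottom_pt u (grid_cell V m (k, 0)) = bottom_pt u V"
  "top_pt u (grid_cell V m (k, m - 1)) = top_pt u V"
  "left_pt u (grid_cell V m (0, k)) = left_pt u V"
  "right_pt u (grid_cell V m (m - 1, k)) = right_pt u V"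
proof -
  have m1: "m - 1 + 1 = m" using m by simp
  show "bottom_pt u (grid_cell V m (k, 0)) = bottom_pt u V"
    using piece_point_eq[OF k m u, of "vtx1 V" "vtx2 V"]
    by (simp add: bottom_pt_def vtx_grid_cell grid_pt_bottom)
  show "top_pt u (grid_cell V m (k, m - 1)) = top_pt u V"
    using piece_point_eq[OF k m u, of "vtx4 V" "vtx3 V"] k m1
    by (simp add: top_pt_def vtx_grid_cell grid_pt_top)
  show "left_pt u (grid_cell V m (0, k)) = left_pt u V"
    using piece_point_eq[OF k m u, of "vtx1 V" "vtx4 V"]
    by (simp add: left_pt_def vtx_grid_cell grid_pt_left)
  show "right_pt u (grid_cell V m (m - 1, k)) = right_pt u V"
    using piece_point_eq[OF k m u, of "vtx2 V" "vtx3 V"] k m1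
    by (simp add: right_pt_def vtx_grid_cell grid_pt_right)
qed

end

lemma below_grid_cells:
  assumes "below W Y" "k + 1 \<le> m" "m \<ge> 2"
  shows "below (grid_cell W m (k, m - 1)) (grid_cell Y m (k, 0))"
proof -
  have "m - 1 + 1 = m" using assms by simp
  then show ?thesis using assms unfolding below_def by (simp add: vtx_grid_cell grid_pt_top grid_pt_bottom)
qed

lemma left_of_grid_cells:
  assumes "left_of W Y" "k + 1 \<le> m" "m \<ge> 2"
  shows "left_of (grid_cell W m (m - 1, k)) (grid_cell Y m (0, k))"
proof -
  have "m - 1 + 1 = m" using assms by simp
  then show ?thesis using assms unfolding left_of_def by (simp add: vtx_grid_cell grid_pt_left grid_pt_right)
qed

context convex_quad
begin

lemma
  assumes "0 \<le> u" "u \<le> 1"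
  shows PV_side_pts: "PV Qs V (bottom_pt u Qs) = bottom_pt u V" "PV Qs V (top_pt u Qs) = top_pt u V"
      "PV Qs V (left_pt u Qs) = left_pt u V" "PV Qs V (right_pt u Qs) = right_pt u V"
    and side_pts_in_QQ: "bottom_pt u Qs \<in> QQ" "top_pt u Qs \<in> QQ" "left_pt u Qs \<in> QQ"
      "right_pt u Qs \<in> QQ"
    and chart_side_pts: "chart (bottom_pt u Qs) $ 2 = 0" "chart (top_pt u Qs) $ 2 = 1"
      "chart (left_pt u Qs) $ 1 = 0" "chart (right_pt u Qs) $ 1 = 1"
proof -
  have c: "quad_coords (1 - u) u 0 0" "quad_coords 0 0 u (1 - u)" "quad_coords (1 - u) 0 0 u"
    "quad_coords 0 (1 - u) u 0"
    using assms by (auto simp: quad_coords_def)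
  show "PV Qs V (bottom_pt u Qs) = bottom_pt u V" "PV Qs V (top_pt u Qs) = top_pt u V"
    "PV Qs V (left_pt u Qs) = left_pt u V" "PV Qs V (right_pt u Qs) = right_pt u V"
    unfolding side_pts_quad_comb using PV_quad_comb c by simp_all
  show "bottom_pt u Qs \<in> QQ" "top_pt u Qs \<in> QQ" "left_pt u Qs \<in> QQ" "right_pt u Qs \<in> QQ"
    unfolding side_pts_quad_comb using quad_comb_in_region[OF c(1), of Qs]
      quad_comb_in_region[OF c(2), of Qs] quad_comb_in_region[OF c(3), of Qs]
      quad_comb_in_region[OF c(4), of Qs] by simp_all
  show "chart (bottom_pt u Qs) $ 2 = 0" "chart (top_pt u Qs) $ 2 = 1"
    "chart (left_pt u Qs) $ 1 = 0" "chart (right_pt u Qs) $ 1 = 1"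
    unfolding side_pts_quad_comb using chart_quad_comb c by simp_all
qed

lemma vertices_extreme:
  "Q1 extreme_point_of QQ" "Q2 extreme_point_of QQ" "Q3 extreme_point_of QQ" "Q4 extreme_point_of QQ"
proof -
  have "Q1 \<notin> convex hull {Q2, Q3, Q4}"
    using mem_convex_hull_3_iff_orient[OF orient_Q234, of Q1] orient_Q412
      orient_swap_12[of Q2 Q4 Q1] orient_rotate[of Q2 Q4 Q1] by simp
  then show "Q1 extreme_point_of QQ" by (simp add: extreme_point_of_convex_hull_insert)
  have "Q2 \<notin> convex hull {Q1, Q3, Q4}"
    using mem_convex_hull_3_iff_orient[OF orient_Q134, of Q2] orient_Q123 orient_swap_23[of Q1 Q2 Q3]
    by simp
  then show "Q2 extreme_point_of QQ"
    using extreme_point_of_convex_hull_insert[of "{Q1, Q3, Q4}" Q2] by (simp add: insert_commute)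
  have "Q3 \<notin> convex hull {Q4, Q1, Q2}"
    using mem_convex_hull_3_iff_orient[OF orient_Q412, of Q3] orient_Q234 orient_swap_23[of Q2 Q3 Q4]
    by simp
  then show "Q3 extreme_point_of QQ"
    using extreme_point_of_convex_hull_insert[of "{Q4, Q1, Q2}" Q3] by (simp add: insert_commute)
  have "Q4 \<notin> convex hull {Q1, Q2, Q3}"
    using mem_convex_hull_3_iff_orient[OF orient_Q123, of Q4] orient_Q134 orient_swap_12[of Q1 Q3 Q4]
    by simp
  then show "Q4 extreme_point_of QQ"
    using extreme_point_of_convex_hull_insert[of "{Q1, Q2, Q3}" Q4] by (simp add: insert_commute)
qed

lemma extreme_grid_pt_in_grid_cell:
  assumes "q extreme_point_of QQ" "q = grid_pt Qs m a b" "a \<le> m" "b \<le> m"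
    and "q \<in> region (grid_cell Qs m (x, y))" "x + 1 \<le> m" "y + 1 \<le> m"
  shows "(a, b) \<in> {(x, y), (x + 1, y), (x + 1, y + 1), (x, y + 1)}"
proof -
  let ?T = "{grid_pt Qs m x y, grid_pt Qs m (x + 1) y, grid_pt Qs m (x + 1) (y + 1),
    grid_pt Qs m x (y + 1)}"
  have "?T \<subseteq> QQ" using grid_pt_in_QQ assms(6,7) by simp
  then have "convex hull ?T \<subseteq> QQ" by (simp add: convex_convex_hull hull_minimal)
  then have "q extreme_point_of convex hull ?T"
    using assms(1,5) by (auto simp: extreme_point_of_def region_def grid_cell_def)
  then have "q \<in> ?T" by (rule extreme_point_of_convex_hull)
  then show ?thesis using assms(2-4,6,7) by (auto simp: grid_pt_eq_iff)
qed

lemma vertices_in_grid_cell: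
  assumes "x + 1 \<le> m" "y + 1 \<le> m"
  shows "Q1 \<in> region (grid_cell Qs m (x, y)) \<Longrightarrow> (x, y) = (0, 0)"
    and "Q2 \<in> region (grid_cell Qs m (x, y)) \<Longrightarrow> (x, y) = (m - 1, 0)"
    and "Q3 \<in> region (grid_cell Qs m (x, y)) \<Longrightarrow> (x, y) = (m - 1, m - 1)"
    and "Q4 \<in> region (grid_cell Qs m (x, y)) \<Longrightarrow> (x, y) = (0, m - 1)"
proof -
  have m: "m > 0" using assms by simp
  have Q: "Q1 = grid_pt Qs m 0 0" "Q2 = grid_pt Qs m m 0" "Q3 = grid_pt Qs m m m" "Q4 = grid_pt Qs m 0 m"
    using grid_pt_corners[OF m, of Qs] by (simp_all add: vtx_defs)
  show "Q1 \<in> region (grid_cell Qs m (x, y)) \<Longrightarrow> (x, y) = (0, 0)"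
    using extreme_grid_pt_in_grid_cell[OF vertices_extreme(1) Q(1) _ _ _ assms] by auto
  show "Q2 \<in> region (grid_cell Qs m (x, y)) \<Longrightarrow> (x, y) = (m - 1, 0)"
    using extreme_grid_pt_in_grid_cell[OF vertices_extreme(2) Q(2) _ _ _ assms] assms by auto
  show "Q3 \<in> region (grid_cell Qs m (x, y)) \<Longrightarrow> (x, y) = (m - 1, m - 1)"
    using extreme_grid_pt_in_grid_cell[OF vertices_extreme(3) Q(3) _ _ _ assms] assms by auto
  show "Q4 \<in> region (grid_cell Qs m (x, y)) \<Longrightarrow> (x, y) = (0, m - 1)"
    using extreme_grid_pt_in_grid_cell[OF vertices_extreme(4) Q(4) _ _ _ assms] assms by auto
qed

end

definition abut_in :: "quad set \<Rightarrow> quad \<Rightarrow> quad \<Rightarrow> bool" where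
  "abut_in S X Y \<longleftrightarrow> X \<in> S \<and> Y \<in> S \<and> abut X Y"

definition chained :: "quad set \<Rightarrow> bool" where
  "chained S \<longleftrightarrow> (\<forall>X\<in>S. \<forall>Y\<in>S. (abut_in S)\<^sup>*\<^sup>* X Y)"

lemma is_walk_rtranclp:
  assumes "is_walk E V vs" "\<And>x y. x \<in> V \<Longrightarrow> y \<in> V \<Longrightarrow> E x y \<Longrightarrow> R x y"
  shows "R\<^sup>*\<^sup>* (hd vs) (last vs)"
  using assms(1)
proof (induction vs)
  case Nil
  then show ?case by (simp add: is_walk_def)
next
  case (Cons a vs)
  show ?case
  proof (cases "vs = []")
    case True
    then show ?thesis by simp
  next
    case False
    have steps: "\<forall>i. Suc i < length (a # vs) \<longrightarrow> E ((a # vs) ! i) ((a # vs) ! Suc i)"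
      using Cons.prems unfolding is_walk_def by blast
    then have "is_walk E V vs"
      using Cons.prems False unfolding is_walk_def by fastforce
    moreover have "E a (hd vs)"
      using steps[rule_format, of 0] False by (simp add: hd_conv_nth)
    moreover have "a \<in> V" "hd vs \<in> V" using Cons.prems False unfolding is_walk_def by auto
    ultimately have "R a (hd vs)" "R\<^sup>*\<^sup>* (hd vs) (last vs)" using Cons.IH assms(2) by auto
    then show ?thesis using False by (simp add: converse_rtranclp_into_rtranclp)
  qed
qed

lemma path_connected_UN_rtranclp:
  assumes pc: "\<And>X. X \<in> S \<Longrightarrow> path_connected (F X)"
    and conn: "\<forall>X\<in>S. \<forall>Y\<in>S. R\<^sup>*\<^sup>* X Y"
    and R: "\<And>X Y. R X Y \<Longrightarrow> Y \<in> S \<and> F X \<inter> F Y \<noteq> {}"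
  shows "path_connected (\<Union>X\<in>S. F X)"
proof -
  let ?U = "\<Union>X\<in>S. F X"
  have pc_U: "path_component ?U x y" if "X \<in> S" "x \<in> F X" "y \<in> F X" for X x y
    using pc[OF that(1)] that path_connected_component path_component_of_subset
    by (metis (no_types, lifting) UN_upper)
  have "R\<^sup>*\<^sup>* X Y \<Longrightarrow> X \<in> S \<Longrightarrow> x \<in> F X \<Longrightarrow> \<forall>y\<in>F Y. path_component ?U x y" for X Y x
  proof (induction rule: rtranclp_induct)
    case base
    then show ?case using pc_U by blast
  next
    case (step Z Y)
    obtain z where z: "z \<in> F Z" "z \<in> F Y" and Y: "Y \<in> S" using R[OF step(2)] by blast
    then show ?case using step pc_U path_component_trans by blast
  qed
  then show ?thesis unfolding path_connected_component using conn by blast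
qed

context convex_quad
begin

lemma chained_if_graph_connected:
  assumes "graph_connected adjacent W" "W \<subseteq> Sset Qs m" "m > 0"
  shows "chained W"
  unfolding chained_def
proof (intro ballI)
  fix X Y assume "X \<in> W" "Y \<in> W"
  then obtain vs where vs: "is_walk adjacent W vs" "hd vs = X" "last vs = Y"
    using assms(1) unfolding graph_connected_def by blast
  have "abut_in W A B" if AB: "A \<in> W" "B \<in> W" "adjacent A B" for A B
  proof -
    obtain k k' where k: "k \<in> Aidx m" "A = Sm Qs m k" "k' \<in> Aidx m" "B = Sm Qs m k'"
      using AB(1,2) assms(2) unfolding Sset_def by blast
    then show ?thesis
      using AB adjacent_grid_cells_abut cell_of_idx_bounds[OF k(1) assms(3)]
        cell_of_idx_bounds[OF k(3) assms(3)] Sm_eq_grid_cell[OF k(1) assms(3)]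
        Sm_eq_grid_cell[OF k(3) assms(3)]
      unfolding abut_in_def by (cases "cell_of_idx k", cases "cell_of_idx k'") auto
  qed
  then show "(abut_in W)\<^sup>*\<^sup>* X Y" using is_walk_rtranclp[OF vs(1)] vs(2,3) by metis
qed

end

definition next_level :: "quad \<Rightarrow> quad set \<Rightarrow> quad set \<Rightarrow> quad set" where
  "next_level Qs W1 S = {Pquad Qs W W' | W W'. W' \<in> W1 \<and> W \<in> S}"

lemma Wlev_Suc_Suc: "Wlev Qs W1 (Suc (Suc n)) = next_level Qs W1 (Wlev Qs W1 (Suc n))"
  by (simp add: next_level_def)

locale labyrinth = convex_quad +
  fixes m :: nat and W1 :: "quad set" and k1 k2 j1 j4 :: nat
  assumes m_ge_2: "m \<ge> 2"
    and W1_subset: "W1 \<subseteq> Sset Qs m"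
    and chained_W1: "chained W1"
    and vertical_exits: "k1 + k2 = m - 1" "Sm Qs m (k1, k2, 0, 0) \<in> W1" "Sm Qs m (0, 0, k2, k1) \<in> W1"
    and horizontal_exits: "j1 + j4 = m - 1" "Sm Qs m (j1, 0, 0, j4) \<in> W1"
      "Sm Qs m (0, j1, j4, 0) \<in> W1"
    and corners_13: "\<not> (Sm Qs m (m - 1, 0, 0, 0) \<in> W1 \<and> Sm Qs m (0, 0, m - 1, 0) \<in> W1)"
    and corners_24: "\<not> (Sm Qs m (0, m - 1, 0, 0) \<in> W1 \<and> Sm Qs m (0, 0, 0, m - 1) \<in> W1)"
begin

text \<open>The relative positions at which the vertical exits meet the bottom and top sides and the
  horizontal exits meet the left and right sides.\<close>
definition "bt_pos = real k2 / (real m - 1)"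
definition "lr_pos = real j4 / (real m - 1)"

lemma m_pos: "m > 0"
  using m_ge_2 by simp

lemma exit_bounds: "k2 + 1 \<le> m" "j4 + 1 \<le> m"
  using vertical_exits(1) horizontal_exits(1) m_ge_2 by auto

lemma exit_pos_bounds: "0 \<le> bt_pos" "bt_pos \<le> 1" "0 \<le> lr_pos" "lr_pos \<le> 1"
  using exit_bounds m_ge_2 by (auto simp: bt_pos_def lr_pos_def)

lemma
  shows Sm_exits: "Sm V m (k1, k2, 0, 0) = grid_cell V m (k2, 0)"
      "Sm V m (0, 0, k2, k1) = grid_cell V m (k2, m - 1)"
      "Sm V m (j1, 0, 0, j4) = grid_cell V m (0, j4)"
      "Sm V m (0, j1, j4, 0) = grid_cell V m (m - 1, j4)"
    and Pquad_exits: "Pquad Qs V (Sm Qs m (k1, k2, 0, 0)) = grid_cell V m (k2, 0)"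
      "Pquad Qs V (Sm Qs m (0, 0, k2, k1)) = grid_cell V m (k2, m - 1)"
      "Pquad Qs V (Sm Qs m (j1, 0, 0, j4)) = grid_cell V m (0, j4)"
      "Pquad Qs V (Sm Qs m (0, j1, j4, 0)) = grid_cell V m (m - 1, j4)"
proof -
  have idx: "(k1, k2, 0, 0) \<in> Aidx m" "(0, 0, k2, k1) \<in> Aidx m" "(j1, 0, 0, j4) \<in> Aidx m"
    "(0, j1, j4, 0) \<in> Aidx m"
    using vertical_exits(1) horizontal_exits(1) by (auto simp: Aidx_def A1_def A2_def A3_def)
  have "k2 + k1 = m - 1" using vertical_exits(1) by simp
  then show "Sm V m (k1, k2, 0, 0) = grid_cell V m (k2, 0)"
      "Sm V m (0, 0, k2, k1) = grid_cell V m (k2, m - 1)"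
      "Sm V m (j1, 0, 0, j4) = grid_cell V m (0, j4)"
      "Sm V m (0, j1, j4, 0) = grid_cell V m (m - 1, j4)"
      "Pquad Qs V (Sm Qs m (k1, k2, 0, 0)) = grid_cell V m (k2, 0)"
      "Pquad Qs V (Sm Qs m (0, 0, k2, k1)) = grid_cell V m (k2, m - 1)"
      "Pquad Qs V (Sm Qs m (j1, 0, 0, j4)) = grid_cell V m (0, j4)"
      "Pquad Qs V (Sm Qs m (0, j1, j4, 0)) = grid_cell V m (m - 1, j4)"
    using Sm_eq_grid_cell[OF idx(1) m_pos] Sm_eq_grid_cell[OF idx(2) m_pos]
      Sm_eq_grid_cell[OF idx(3) m_pos] Sm_eq_grid_cell[OF idx(4) m_pos]
      Pquad_Sm[OF idx(1) m_pos] Pquad_Sm[OF idx(2) m_pos] Pquad_Sm[OF idx(3) m_pos]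
      Pquad_Sm[OF idx(4) m_pos] horizontal_exits(1)
    by (simp_all add: cell_of_idx_def)
qed

lemma W1_grid_cell:
  assumes "X \<in> W1"
  obtains x y where "x + 1 \<le> m" "y + 1 \<le> m" "X = grid_cell Qs m (x, y)"
    "\<And>V. Pquad Qs V X = grid_cell V m (x, y)"
proof -
  obtain k where k: "k \<in> Aidx m" "X = Sm Qs m k" using assms W1_subset unfolding Sset_def by blast
  then show ?thesis
    using that cell_of_idx_bounds[OF k(1) m_pos] Sm_eq_grid_cell[OF k(1) m_pos] Pquad_Sm[OF k(1) m_pos]
    by (cases "cell_of_idx k") auto
qed

lemma chained_lift:
  assumes "W \<in> S" "(abut_in W1)\<^sup>*\<^sup>* A B"
  shows "(abut_in (next_level Qs W1 S))\<^sup>*\<^sup>* (Pquad Qs W A) (Pquad Qs W B)"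
  using assms(2)
proof (induction rule: rtranclp_induct)
  case (step B C)
  then have "abut_in (next_level Qs W1 S) (Pquad Qs W B) (Pquad Qs W C)"
    using assms(1) abut_Pquad unfolding abut_in_def next_level_def by blast
  then show ?case using step by simp
qed simp

lemma abutting_exits:
  assumes "abut Z Y"
  shows "\<exists>A\<in>W1. \<exists>B\<in>W1. abut (Pquad Qs Z A) (Pquad Qs Y B)"
proof -
  have "below (grid_cell W m (k2, m - 1)) (grid_cell Y' m (k2, 0))" if "below W Y'" for W Y'
    using below_grid_cells[OF that exit_bounds(1) m_ge_2] .
  moreover have "left_of (grid_cell W m (m - 1, j4)) (grid_cell Y' m (0, j4))" if "left_of W Y'" for W Y'
    using left_of_grid_cells[OF that exit_bounds(2) m_ge_2] .
  ultimately show ?thesis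
    using assms vertical_exits(2,3) horizontal_exits(2,3) unfolding abut_def Pquad_exits[symmetric]
    by metis
qed

lemma chained_next_level:
  assumes "chained S"
  shows "chained (next_level Qs W1 S)"
proof -
  let ?N = "next_level Qs W1 S"
  have "(abut_in S)\<^sup>*\<^sup>* Z Y \<Longrightarrow> Z \<in> S \<Longrightarrow>
      \<forall>A\<in>W1. \<forall>B\<in>W1. (abut_in ?N)\<^sup>*\<^sup>* (Pquad Qs Z A) (Pquad Qs Y B)" for Z Y
  proof (induction rule: rtranclp_induct)
    case base
    then show ?case using chained_lift chained_W1 unfolding chained_def by blast
  next
    case (step Y Y')
    then have Y: "Y \<in> S" "Y' \<in> S" "abut Y Y'" unfolding abut_in_def by auto
    obtain A0 B0 where AB: "A0 \<in> W1" "B0 \<in> W1" "abut (Pquad Qs Y A0) (Pquad Qs Y' B0)"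
      using abutting_exits[OF Y(3)] by blast
    then have "abut_in ?N (Pquad Qs Y A0) (Pquad Qs Y' B0)"
      using Y unfolding abut_in_def next_level_def by blast
    then show ?case
      using step.IH[OF step.prems] AB(1,2) chained_lift[OF Y(2)] chained_W1
      unfolding chained_def by (meson rtranclp.rtrancl_into_rtrancl rtranclp_trans)
  qed
  then show ?thesis
    using assms unfolding chained_def next_level_def by blast
qed

lemma chained_levels: "chained (Wlev Qs W1 (Suc n))"
proof (induction n)
  case (Suc n)
  then show ?case unfolding Wlev_Suc_Suc by (rule chained_next_level)
qed (simp add: chained_W1)

lemma levels_meet_sides:
  "(\<exists>X\<in>Wlev Qs W1 (Suc n). bottom_pt bt_pos X = bottom_pt bt_pos Qs)
   \<and> (\<exists>X\<in>Wlev Qs W1 (Suc n). top_pt bt_pos X = top_pt bt_pos Qs)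
   \<and> (\<exists>X\<in>Wlev Qs W1 (Suc n). left_pt lr_pos X = left_pt lr_pos Qs)
   \<and> (\<exists>X\<in>Wlev Qs W1 (Suc n). right_pt lr_pos X = right_pt lr_pos Qs)"
proof (induction n)
  case 0
  show ?case
    using vertical_exits(2,3) horizontal_exits(2,3)
      side_pts_grid_cell[OF exit_bounds(1) m_ge_2 bt_pos_def, of Qs]
      side_pts_grid_cell[OF exit_bounds(2) m_ge_2 lr_pos_def, of Qs]
    unfolding Sm_exits by (metis Wlev.simps(2))
next
  case (Suc n)
  have child: "grid_cell X m p \<in> Wlev Qs W1 (Suc (Suc n))"
    if "X \<in> Wlev Qs W1 (Suc n)" "Sm Qs m k \<in> W1" "Pquad Qs X (Sm Qs m k) = grid_cell X m p" for X k p
  proof -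
    have "Pquad Qs X (Sm Qs m k) \<in> next_level Qs W1 (Wlev Qs W1 (Suc n))"
      using that(1,2) unfolding next_level_def by blast
    then show ?thesis using that(3) by (simp only: Wlev_Suc_Suc)
  qed
  from Suc.IH obtain Xb Xt Xl Xr where
    Xb: "Xb \<in> Wlev Qs W1 (Suc n)" "bottom_pt bt_pos Xb = bottom_pt bt_pos Qs" and
    Xt: "Xt \<in> Wlev Qs W1 (Suc n)" "top_pt bt_pos Xt = top_pt bt_pos Qs" and
    Xl: "Xl \<in> Wlev Qs W1 (Suc n)" "left_pt lr_pos Xl = left_pt lr_pos Qs" and
    Xr: "Xr \<in> Wlev Qs W1 (Suc n)" "right_pt lr_pos Xr = right_pt lr_pos Qs"
    by blast
  note bt = side_pts_grid_cell[OF exit_bounds(1) m_ge_2 bt_pos_def]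
  note lr = side_pts_grid_cell[OF exit_bounds(2) m_ge_2 lr_pos_def]
  show ?case
  proof (intro conjI)
    show "\<exists>X\<in>Wlev Qs W1 (Suc (Suc n)). bottom_pt bt_pos X = bottom_pt bt_pos Qs"
      by (rule bexI[OF _ child[OF Xb(1) vertical_exits(2) Pquad_exits(1)]]) (simp only: bt(1) Xb(2))
    show "\<exists>X\<in>Wlev Qs W1 (Suc (Suc n)). top_pt bt_pos X = top_pt bt_pos Qs"
      by (rule bexI[OF _ child[OF Xt(1) vertical_exits(3) Pquad_exits(2)]]) (simp only: bt(2) Xt(2))
    show "\<exists>X\<in>Wlev Qs W1 (Suc (Suc n)). left_pt lr_pos X = left_pt lr_pos Qs"
      by (rule bexI[OF _ child[OF Xl(1) horizontal_exits(2) Pquad_exits(3)]]) (simp only: lr(3) Xl(2))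
    show "\<exists>X\<in>Wlev Qs W1 (Suc (Suc n)). right_pt lr_pos X = right_pt lr_pos Qs"
      by (rule bexI[OF _ child[OF Xr(1) horizontal_exits(3) Pquad_exits(4)]]) (simp only: lr(4) Xr(2))
  qed
qed

lemma level_region_in_cell:
  assumes "W \<in> Wlev Qs W1 (Suc n)"
  obtains x y where "x + 1 \<le> m" "y + 1 \<le> m" "grid_cell Qs m (x, y) \<in> W1"
    "region W \<subseteq> region (grid_cell Qs m (x, y))"
  using assms
proof (induction n arbitrary: W thesis)
  case 0
  then have "W \<in> W1" by simp
  then show ?case by (rule W1_grid_cell) (use 0 \<open>W \<in> W1\<close> in blast)
next
  case (Suc n)
  then obtain P A where W: "W = Pquad Qs P A" "A \<in> W1" "P \<in> Wlev Qs W1 (Suc n)"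
    unfolding Wlev_Suc_Suc next_level_def by blast
  obtain x y where "x + 1 \<le> m" "y + 1 \<le> m" "W = grid_cell P m (x, y)"
    by (rule W1_grid_cell[OF W(2)]) (simp add: W(1))
  then have WP: "region W \<subseteq> region P" using region_grid_cell_subset by blast
  obtain x' y' where "x' + 1 \<le> m" "y' + 1 \<le> m" "grid_cell Qs m (x', y') \<in> W1"
    "region P \<subseteq> region (grid_cell Qs m (x', y'))"
    using Suc.IH[OF _ W(3)] by blast
  then show ?case using Suc.prems(1) WP by (meson order_trans)
qed

lemma Llev_subset_QQ: "Llev Qs W1 (Suc n) \<subseteq> QQ"
proof
  fix z assume "z \<in> Llev Qs W1 (Suc n)"
  then obtain W where W: "W \<in> Wlev Qs W1 (Suc n)" "z \<in> region W" unfolding Llev_def by blast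
  obtain x y where "x + 1 \<le> m" "y + 1 \<le> m" "region W \<subseteq> region (grid_cell Qs m (x, y))"
    by (rule level_region_in_cell[OF W(1)]) blast
  then show "z \<in> QQ" using W(2) region_grid_cell_subset[of x m y Qs] by auto
qed

lemma finite_W1: "finite W1"
proof -
  have "finite (Aidx m)"
    by (rule finite_subset[of _ "{..m} \<times> {..m} \<times> {..m} \<times> {..m}"])
      (auto simp: Aidx_def A1_def A2_def A3_def)
  then show ?thesis using W1_subset finite_subset unfolding Sset_def by blast
qed

lemma finite_levels: "finite (Wlev Qs W1 (Suc n))"
proof (induction n)
  case (Suc n)
  have "finite {Pquad Qs W W' |W W'. W \<in> Wlev Qs W1 (Suc n) \<and> W' \<in> W1}"
    using finite_image_set2[of "\<lambda>W. W \<in> Wlev Qs W1 (Suc n)" "\<lambda>W'. W' \<in> W1" "Pquad Qs"]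
      Suc.IH finite_W1 by (simp del: Wlev.simps)
  moreover have "next_level Qs W1 (Wlev Qs W1 (Suc n))
      = {Pquad Qs W W' |W W'. W \<in> Wlev Qs W1 (Suc n) \<and> W' \<in> W1}"
    unfolding next_level_def by blast
  ultimately show ?case by (simp only: Wlev_Suc_Suc)
qed (simp add: finite_W1)

lemma closed_Llev: "closed (Llev Qs W1 (Suc n))"
proof -
  have "closed (region W)" for W
    by (cases W) (simp add: region_def compact_imp_closed compact_convex_hull finite_imp_compact)
  then show ?thesis unfolding Llev_def by (blast intro: closed_UN[OF finite_levels])
qed

lemma vertices_notin_Llev:
  "Sm Qs m (m - 1, 0, 0, 0) \<notin> W1 \<Longrightarrow> Q1 \<notin> Llev Qs W1 (Suc n)"
  "Sm Qs m (0, m - 1, 0, 0) \<notin> W1 \<Longrightarrow> Q2 \<notin> Llev Qs W1 (Suc n)"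
  "Sm Qs m (0, 0, m - 1, 0) \<notin> W1 \<Longrightarrow> Q3 \<notin> Llev Qs W1 (Suc n)"
  "Sm Qs m (0, 0, 0, m - 1) \<notin> W1 \<Longrightarrow> Q4 \<notin> Llev Qs W1 (Suc n)"
proof -
  have idx: "(m - 1, 0, 0, 0) \<in> Aidx m" "(0, m - 1, 0, 0) \<in> Aidx m" "(0, 0, m - 1, 0) \<in> Aidx m"
    "(0, 0, 0, m - 1) \<in> Aidx m"
    using m_ge_2 by (auto simp: Aidx_def A1_def A2_def A3_def)
  have corner_cells:
    "Sm Qs m (m - 1, 0, 0, 0) = grid_cell Qs m (0, 0)" "Sm Qs m (0, m - 1, 0, 0) = grid_cell Qs m (m - 1, 0)"
    "Sm Qs m (0, 0, m - 1, 0) = grid_cell Qs m (m - 1, m - 1)"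
    "Sm Qs m (0, 0, 0, m - 1) = grid_cell Qs m (0, m - 1)"
    using Sm_eq_grid_cell[OF idx(1) m_pos] Sm_eq_grid_cell[OF idx(2) m_pos]
      Sm_eq_grid_cell[OF idx(3) m_pos] Sm_eq_grid_cell[OF idx(4) m_pos]
    by (simp_all add: cell_of_idx_def)
  have "grid_cell Qs m c \<in> W1" if q: "q \<in> Llev Qs W1 (Suc n)"
    and cell: "\<And>x y. x + 1 \<le> m \<Longrightarrow> y + 1 \<le> m \<Longrightarrow> q \<in> region (grid_cell Qs m (x, y)) \<Longrightarrow> (x, y) = c"
    for q c
  proof -
    obtain W where W: "W \<in> Wlev Qs W1 (Suc n)" "q \<in> region W" using q unfolding Llev_def by blast
    obtain x y where "x + 1 \<le> m" "y + 1 \<le> m" "grid_cell Qs m (x, y) \<in> W1"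
        "region W \<subseteq> region (grid_cell Qs m (x, y))"
      by (rule level_region_in_cell[OF W(1)]) blast
    moreover from this have "(x, y) = c" using W(2) cell by (meson subsetD)
    ultimately show ?thesis by simp
  qed
  note corner = this
  show
    "Sm Qs m (m - 1, 0, 0, 0) \<notin> W1 \<Longrightarrow> Q1 \<notin> Llev Qs W1 (Suc n)"
    "Sm Qs m (0, m - 1, 0, 0) \<notin> W1 \<Longrightarrow> Q2 \<notin> Llev Qs W1 (Suc n)"
    "Sm Qs m (0, 0, m - 1, 0) \<notin> W1 \<Longrightarrow> Q3 \<notin> Llev Qs W1 (Suc n)"
    "Sm Qs m (0, 0, 0, m - 1) \<notin> W1 \<Longrightarrow> Q4 \<notin> Llev Qs W1 (Suc n)"
    unfolding corner_cells
    using corner[OF _ vertices_in_grid_cell(1)[of _ m]] corner[OF _ vertices_in_grid_cell(2)[of _ m]]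
      corner[OF _ vertices_in_grid_cell(3)[of _ m]] corner[OF _ vertices_in_grid_cell(4)[of _ m]]
    by blast+
qed

definition skeleton :: "nat \<Rightarrow> pt set" where
  "skeleton n = (\<Union>W\<in>Wlev Qs W1 (Suc n). PV Qs W ` QQ)"

lemma path_connected_skeleton: "path_connected (skeleton n)"
  unfolding skeleton_def
proof (rule path_connected_UN_rtranclp)
  show "path_connected (PV Qs W ` QQ)" for W
    by (rule path_connected_continuous_image[OF continuous_on_PV])
      (simp add: convex_imp_path_connected convex_convex_hull)
  show "\<forall>X\<in>Wlev Qs W1 (Suc n). \<forall>Y\<in>Wlev Qs W1 (Suc n). (abut_in (Wlev Qs W1 (Suc n)))\<^sup>*\<^sup>* X Y"
    using chained_levels unfolding chained_def .
  show "Y \<in> Wlev Qs W1 (Suc n) \<and> PV Qs X ` QQ \<inter> PV Qs Y ` QQ \<noteq> {}"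
    if "abut_in (Wlev Qs W1 (Suc n)) X Y" for X Y
    using that abut_images_meet unfolding abut_in_def by blast
qed

lemma skeleton_subset_Llev: "skeleton n \<subseteq> Llev Qs W1 (Suc n)"
  unfolding skeleton_def Llev_def by (intro UN_mono) (auto intro: PV_in_region)

lemma skeleton_subset_QQ: "skeleton n \<subseteq> QQ"
  using skeleton_subset_Llev Llev_subset_QQ by (rule order_trans)

lemma side_pts_in_skeleton:
  "bottom_pt bt_pos Qs \<in> skeleton n" "top_pt bt_pos Qs \<in> skeleton n"
  "left_pt lr_pos Qs \<in> skeleton n" "right_pt lr_pos Qs \<in> skeleton n"
proof -
  have img: "PV Qs X z \<in> skeleton n" if "X \<in> Wlev Qs W1 (Suc n)" "z \<in> QQ" for X z
    using that unfolding skeleton_def by blast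
  obtain Xb Xt Xl Xr where
    Xb: "Xb \<in> Wlev Qs W1 (Suc n)" "bottom_pt bt_pos Xb = bottom_pt bt_pos Qs" and
    Xt: "Xt \<in> Wlev Qs W1 (Suc n)" "top_pt bt_pos Xt = top_pt bt_pos Qs" and
    Xl: "Xl \<in> Wlev Qs W1 (Suc n)" "left_pt lr_pos Xl = left_pt lr_pos Qs" and
    Xr: "Xr \<in> Wlev Qs W1 (Suc n)" "right_pt lr_pos Xr = right_pt lr_pos Qs"
    using levels_meet_sides[of n] by blast
  note bt = PV_side_pts[OF exit_pos_bounds(1,2)] side_pts_in_QQ[OF exit_pos_bounds(1,2)]
  note lr = PV_side_pts[OF exit_pos_bounds(3,4)] side_pts_in_QQ[OF exit_pos_bounds(3,4)]
  show "bottom_pt bt_pos Qs \<in> skeleton n" using img[OF Xb(1) bt(5)] bt(1) Xb(2) by simp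
  show "top_pt bt_pos Qs \<in> skeleton n" using img[OF Xt(1) bt(6)] bt(2) Xt(2) by simp
  show "left_pt lr_pos Qs \<in> skeleton n" using img[OF Xl(1) lr(7)] lr(3) Xl(2) by simp
  show "right_pt lr_pos Qs \<in> skeleton n" using img[OF Xr(1) lr(8)] lr(4) Xr(2) by simp
qed

end

section \<open>Separation by the chart\<close>

context convex_quad
begin

lemma not_path_component_across:
  assumes C: "C \<subseteq> QQ" "path_connected C" "a \<in> C" "b \<in> C"
    and ends: "(chart p $ 1 = 0 \<and> chart q $ 1 = 1 \<and> chart a $ 2 = 0 \<and> chart b $ 2 = 1)
             \<or> (chart p $ 2 = 0 \<and> chart q $ 2 = 1 \<and> chart a $ 1 = 0 \<and> chart b $ 1 = 1)"
  shows "\<not> path_component (QQ - C) p q"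
proof
  assume "path_component (QQ - C) p q"
  then obtain g where g: "path g" "path_image g \<subseteq> QQ - C" "pathstart g = p" "pathfinish g = q"
    unfolding path_component_def by blast
  obtain d where d: "path d" "path_image d \<subseteq> C" "pathstart d = a" "pathfinish d = b"
    using C(2-4) unfolding path_connected_def by blast
  have paths: "path (chart \<circ> g)" "path (chart \<circ> d)"
    using g(1,2) d(1,2) C(1)
    by (auto intro!: path_continuous_image continuous_on_subset[OF continuous_on_PV])
  have boxes: "path_image (chart \<circ> g) \<subseteq> cbox 0 1" "path_image (chart \<circ> d) \<subseteq> cbox 0 1"
    using g(2) d(2) C(1) chart_in_unit_box by (auto simp: path_image_compose)
  have "path_image (chart \<circ> g) \<inter> path_image (chart \<circ> d) \<noteq> {}"
    using ends
  proof (elim disjE conjE)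
    assume "chart p $ 1 = 0" "chart q $ 1 = 1" "chart a $ 2 = 0" "chart b $ 2 = 1"
    then show ?thesis
      using fashoda[OF paths boxes] g(3,4) d(3,4) by (auto simp: pathstart_compose pathfinish_compose)
  next
    assume "chart p $ 2 = 0" "chart q $ 2 = 1" "chart a $ 1 = 0" "chart b $ 1 = 1"
    then show ?thesis
      using fashoda[OF paths(2,1) boxes(2,1)] g(3,4) d(3,4)
      by (auto simp: pathstart_compose pathfinish_compose)
  qed
  then obtain y1 y2 where y: "y1 \<in> path_image g" "y2 \<in> path_image d" "chart y1 = chart y2"
    by (auto simp: path_image_compose)
  have "y1 \<in> QQ" "y2 \<in> QQ" using y(1,2) g(2) d(2) C(1) by auto
  then have "y1 = y2" using inj_onD[OF inj_on_chart y(3)] by blast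
  then show False using y(1,2) g(2) d(2) by blast
qed

end

context labyrinth
begin

lemma complement_not_path_connected: "\<not> path_connected (QQ - Llev Qs W1 (Suc n))"
proof
  let ?L = "Llev Qs W1 (Suc n)"
  assume "path_connected (QQ - ?L)"
  then have pc: "path_component (QQ - skeleton n) p q" if "p \<in> QQ - ?L" "q \<in> QQ - ?L" for p q
    using that path_component_of_subset[OF Diff_mono[OF order_refl skeleton_subset_Llev]]
    by (simp add: path_connected_component)
  note across = not_path_component_across[OF skeleton_subset_QQ path_connected_skeleton]
  note bt = chart_side_pts[OF exit_pos_bounds(1,2)] and lr = chart_side_pts[OF exit_pos_bounds(3,4)]
  have horizontal: False if "p \<in> QQ - ?L" "q \<in> QQ - ?L" "chart p $ 1 = 0" "chart q $ 1 = 1" for p q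
    using across[OF side_pts_in_skeleton(1,2), of p q] pc[OF that(1,2)] that(3,4) bt by blast
  have vertical: False if "p \<in> QQ - ?L" "q \<in> QQ - ?L" "chart p $ 2 = 0" "chart q $ 2 = 1" for p q
    using across[OF side_pts_in_skeleton(3,4), of p q] pc[OF that(1,2)] that(3,4) lr by blast
  have "Q1 \<in> QQ" "Q2 \<in> QQ" "Q3 \<in> QQ" "Q4 \<in> QQ" by (simp_all add: hull_inc)
  moreover have "Q1 \<notin> ?L \<or> Q3 \<notin> ?L" "Q2 \<notin> ?L \<or> Q4 \<notin> ?L"
    using corners_13 corners_24 vertices_notin_Llev by blast+
  ultimately show False
    using horizontal[of Q1 Q2] vertical[of Q2 Q3] vertical[of Q1 Q4] horizontal[of Q4 Q3] chart_vertices
    by auto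
qed

lemma complement_not_connected: "\<not> connected (QQ - Llev Qs W1 (Suc n))"
proof
  let ?L = "Llev Qs W1 (Suc n)"
  assume conn: "connected (QQ - ?L)"
  have "openin (top_of_set QQ) (QQ - ?L)"
    using openin_diff[OF openin_subtopology_self closedin_closed_Int[OF closed_Llev, of QQ n]]
    by (simp add: Diff_Int)
  then have lpc: "locally path_connected (QQ - ?L)"
    using locally_open_subset convex_imp_locally_path_connected convex_convex_hull by blast
  have "path_component_set (QQ - ?L) x = QQ - ?L" if "x \<in> QQ - ?L" for x
    using path_component_eq_connected_component_set[OF lpc] connected_component_eq_self[OF conn that]
    by simp
  then show False using complement_not_path_connected path_connected_component_set by blast
qed

end

lemma labyrinth_set_imp_labyrinth:
  assumes "convex_quad_ccw (Q1, Q2, Q3, Q4)" "labyrinth_set (Q1, Q2, Q3, Q4) m W1"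
  obtains k1 k2 j1 j4 where "labyrinth Q1 Q2 Q3 Q4 m W1 k1 k2 j1 j4"
proof -
  have quad: "convex_quad Q1 Q2 Q3 Q4" using assms(1) by (rule convex_quad.intro)
  from assms(2) obtain k1 k2 j1 j4 where
      k: "(k1, k2, 0, 0) \<in> Aidx m" "Sm (Q1, Q2, Q3, Q4) m (k1, k2, 0, 0) \<in> W1"
        "Sm (Q1, Q2, Q3, Q4) m (0, 0, k2, k1) \<in> W1"
    and j: "(j1, 0, 0, j4) \<in> Aidx m" "Sm (Q1, Q2, Q3, Q4) m (j1, 0, 0, j4) \<in> W1"
        "Sm (Q1, Q2, Q3, Q4) m (0, j1, j4, 0) \<in> W1"
    unfolding labyrinth_set_def by blast
  have "k1 + k2 = m - 1" "j1 + j4 = m - 1"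
    using k(1) j(1) by (auto simp: Aidx_def A1_def A2_def A3_def)
  moreover have "chained W1"
    using assms(2) convex_quad.chained_if_graph_connected[OF quad, of W1 m]
    unfolding labyrinth_set_def is_tree_def by simp
  ultimately have "labyrinth_axioms Q1 Q2 Q3 Q4 m W1 k1 k2 j1 j4"
    using assms(2) k(2,3) j(2,3) unfolding labyrinth_set_def by (intro labyrinth_axioms.intro) auto
  then show ?thesis using that labyrinth.intro[OF quad] by blast
qed

theorem corollary4p4:
  fixes Q1 Q2 Q3 Q4 :: "real^2" and m :: nat and W1 :: "quad set"
  assumes "convex_quad_ccw (Q1, Q2, Q3, Q4)"
    and "dist Q1 Q3 \<le> dist Q2 Q4"
    and "m \<ge> 4"
    and "labyrinth_set (Q1, Q2, Q3, Q4) m W1"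
  shows "\<forall>n\<ge>1. \<not> path_connected (convex hull {Q1, Q2, Q3, Q4} - Llev (Q1, Q2, Q3, Q4) W1 n)
              \<and> \<not> connected (convex hull {Q1, Q2, Q3, Q4} - Llev (Q1, Q2, Q3, Q4) W1 n)"
proof (intro allI impI)
  fix n :: nat
  assume "n \<ge> 1"
  then obtain n' where n: "n = Suc n'" by (cases n) auto
  obtain k1 k2 j1 j4 where lab: "labyrinth Q1 Q2 Q3 Q4 m W1 k1 k2 j1 j4"
    using labyrinth_set_imp_labyrinth[OF assms(1,4)] .
  show "\<not> path_connected (convex hull {Q1, Q2, Q3, Q4} - Llev (Q1, Q2, Q3, Q4) W1 n)
      \<and> \<not> connected (convex hull {Q1, Q2, Q3, Q4} - Llev (Q1, Q2, Q3, Q4) W1 n)"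
    unfolding n using labyrinth.complement_not_path_connected[OF lab]
      labyrinth.complement_not_connected[OF lab] by blast
qed

end
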